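(* Let $S$ be a set of $9$ points of $PG(3,2)$ which is a strong blocking set, i.e. for every plane $\sigma$ of $PG(3,2)$ the points of $\sigma\cap S$ span $\sigma$. Then: (i) every plane $\pi$ of $PG(3,2)$ contains at most $5$ points of $S$; (ii) if a plane $\pi$ contains a line $\ell$ all of whose points lie in $S$, then $\pi$ contains exactly $5$ points of $S$, and these $5$ points form two lines (each entirely contained in $S$) meeting in a point.
   Context: $PG(3,2)$ is the $3$-dimensional projective space over $\mathbb{F}_2$ (15 points, each line has 3 points, each plane has 7 points). A strong blocking set in $PG(3,2)$ is a set of points $S$ such that for every plane (hyperplane) $\sigma$, the span $\langle \sigma\cap S\rangle$ equals $\sigma$. The minimum possible size of a strong blocking set in $PG(3,2)$ is $9$; a strong blocking set of size $9$ is called a minimal strong blocking set. A "line of $S$" means a projective line all of whose points belong to $S$. *)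

theory Defs
  imports "HOL-Analysis.Analysis" "HOL-Library.Z2"
begin

text \<open>PG(3,2): points are the nonzero vectors of GF(2)^4 (type bit ^ 4, where
  bit is the two-element field from HOL-Library.Z2).\<close>

definition pg_points :: "(bit ^ 4) set" where
  "pg_points = {x. x \<noteq> 0}"

definition gf2_dot :: "bit ^ 4 \<Rightarrow> bit ^ 4 \<Rightarrow> bit" where
  "gf2_dot a x = (\<Sum>i\<in>UNIV. a $ i * x $ i)"

definition pg_plane :: "(bit ^ 4) set \<Rightarrow> bool" where
  "pg_plane P \<longleftrightarrow> (\<exists>a. a \<noteq> 0 \<and> P = {x. x \<noteq> 0 \<and> gf2_dot a x = 0})"

definition pg_line :: "(bit ^ 4) set \<Rightarrow> bool" where
  "pg_line L \<longleftrightarrow> (\<exists>u v. u \<noteq> 0 \<and> v \<noteq> 0 \<and> u \<noteq> v \<and> L = {u, v, u + v})"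

definition pg_span :: "(bit ^ 4) set \<Rightarrow> (bit ^ 4) set" where
  "pg_span T = module.span ((*s)) T - {0}"

definition strong_blocking_set :: "(bit ^ 4) set \<Rightarrow> bool" where
  "strong_blocking_set S \<longleftrightarrow> S \<subseteq> pg_points \<and>
     (\<forall>\<sigma>. pg_plane \<sigma> \<longrightarrow> pg_span (\<sigma> \<inter> S) = \<sigma>)"

end

theory Submission
  imports Defs
begin

text \<open>Write \<open>k(\<pi>) = |\<pi> \<inter> S|\<close>. Since \<open>\<pi> \<inter> S\<close> spans \<open>\<pi>\<close>, it lies in no other plane. Any three
  points lie in a common plane, so \<open>k(\<pi>) \<ge> 3\<close>; and if at most three points of \<open>S\<close> lay off \<open>\<pi>\<close>,
  they would lie in a plane \<open>\<sigma>\<close>, and the third plane through the line \<open>\<pi> \<inter> \<sigma>\<close> would meet \<open>S\<close>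
  only inside \<open>\<pi>\<close>; hence \<open>k(\<pi>) \<le> |S| - 4 = 5\<close>. Double counting over the 15 planes gives
  \<open>\<Sum> k = 7 \<cdot> 9\<close> and \<open>\<Sum> k\<^sup>2 = 9 \<cdot> 7 + 72 \<cdot> 3\<close>, so \<open>\<Sum> (k - 3)(5 - k) = 0\<close> with nonnegative
  terms: every plane meets \<open>S\<close> in 3 or 5 points. A plane containing a line \<open>\<ell>\<close> of \<open>S\<close> cannot meet
  \<open>S\<close> in \<open>\<ell>\<close> alone, so it meets \<open>S\<close> in 5 points; the two points \<open>p, q\<close> off \<open>\<ell>\<close> lie in the
  coset \<open>p + (\<ell> \<union> {0})\<close>, hence \<open>p + q \<in> \<ell>\<close> and \<open>{p, q, p + q}\<close> is the second line.\<close>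

lemma bit_vec_uminus [simp]: "- (x :: bit ^ 'n) = x"
  by (simp add: vec_eq_iff)

lemma bit_vec_add_self [simp]: "(x :: bit ^ 'n) + x = 0"
  by (metis bit_vec_uminus right_minus)

lemma bit_vec_add_self_left [simp]: "(x :: bit ^ 'n) + (x + y) = y"
  by (simp flip: add.assoc)

lemma bit_vec_add_eq_0_iff: "(x :: bit ^ 'n) + y = 0 \<longleftrightarrow> x = y"
  by (metis add_eq_0_iff bit_vec_uminus)

lemma gf2_dot_add_left: "gf2_dot (a + b) x = gf2_dot a x + gf2_dot b x"
  by (simp only: gf2_dot_def vector_add_component distrib_right sum.distrib)

lemma gf2_dot_add_right: "gf2_dot a (x + y) = gf2_dot a x + gf2_dot a y"
  by (simp only: gf2_dot_def vector_add_component distrib_left sum.distrib)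

lemma gf2_dot_scale_right: "gf2_dot a (c *s x) = c * gf2_dot a x"
  by (simp only: gf2_dot_def vector_smult_component sum_distrib_left mult.left_commute)

lemma gf2_dot_zero_right: "gf2_dot a 0 = 0"
  by (simp add: gf2_dot_def)

lemma UNIV_bit: "(UNIV :: bit set) = {0, 1}"
  using bit_not_zero_iff by blast

text \<open>Coordinates are encoded by booleans, so that statements about the 16 vectors of
  \<open>GF(2)\<^sup>4\<close> are decided by splitting the boolean coordinates.\<close>

definition bvec4 :: "bool \<Rightarrow> bool \<Rightarrow> bool \<Rightarrow> bool \<Rightarrow> bit ^ 4" where
  "bvec4 a b c d = (\<chi> i. of_bool (if i = 1 then a else if i = 2 then b else if i = 3 then c else d))"

lemma bvec4_nth [simp]:
  "bvec4 a b c d $ 1 = of_bool a" "bvec4 a b c d $ 2 = of_bool b"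
  "bvec4 a b c d $ 3 = of_bool c" "bvec4 a b c d $ 4 = of_bool d"
  by (simp_all add: bvec4_def)

lemma bvec4_eq_iff [simp]:
  "bvec4 a b c d = bvec4 a' b' c' d' \<longleftrightarrow> a = a' \<and> b = b' \<and> c = c' \<and> d = d'"
  by (auto simp: vec_eq_iff forall_4)

lemma bvec4_eq_0_iff [simp]: "bvec4 a b c d = 0 \<longleftrightarrow> \<not> a \<and> \<not> b \<and> \<not> c \<and> \<not> d"
  by (auto simp: vec_eq_iff forall_4)

lemma bvec4_components: "x = bvec4 (x $ 1 = 1) (x $ 2 = 1) (x $ 3 = 1) (x $ 4 = 1)"
  by (auto simp: vec_eq_iff forall_4)

lemma bit_vec4_cases:
  obtains "x = bvec4 False False False False"
    | "x = bvec4 False False False True"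
    | "x = bvec4 False False True False"
    | "x = bvec4 False False True True"
    | "x = bvec4 False True False False"
    | "x = bvec4 False True False True"
    | "x = bvec4 False True True False"
    | "x = bvec4 False True True True"
    | "x = bvec4 True False False False"
    | "x = bvec4 True False False True"
    | "x = bvec4 True False True False"
    | "x = bvec4 True False True True"
    | "x = bvec4 True True False False"
    | "x = bvec4 True True False True"
    | "x = bvec4 True True True False"
    | "x = bvec4 True True True True"
proof -
  obtain a b c d where "x = bvec4 a b c d"
    using bvec4_components by blast
  then show ?thesis
    using that by (cases a; cases b; cases c; cases d) simp_all
qed

lemma gf2_dot_bvec4 [simp]:
  "gf2_dot (bvec4 a b c d) (bvec4 x y z w) =
     of_bool ((((a \<and> x) \<noteq> (b \<and> y)) \<noteq> (c \<and> z)) \<noteq> (d \<and> w))"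
  by (simp add: gf2_dot_def sum_4)

definition bit_vec4_list :: "(bit ^ 4) list" where
  "bit_vec4_list = [bvec4 a b c d. a \<leftarrow> [False, True], b \<leftarrow> [False, True],
     c \<leftarrow> [False, True], d \<leftarrow> [False, True]]"

lemma set_bit_vec4_list: "set bit_vec4_list = UNIV"
proof -
  have "bvec4 a b c d \<in> set bit_vec4_list" for a b c d
    by (cases a; cases b; cases c; cases d) (simp_all add: bit_vec4_list_def)
  then show ?thesis
    by (metis UNIV_eq_I bvec4_components)
qed

lemma all_bit_vec4: "(\<forall>x :: bit ^ 4. P x) \<longleftrightarrow> (\<forall>a b c d. P (bvec4 a b c d))"
  by (metis bvec4_components)

lemma ex_bit_vec4: "(\<exists>x :: bit ^ 4. P x) \<longleftrightarrow> (\<exists>a b c d. P (bvec4 a b c d))"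
  by (metis bvec4_components)

lemma finite_UNIV_bit_vec4: "finite (UNIV :: (bit ^ 4) set)"
  by (metis List.finite_set set_bit_vec4_list)

lemma finite_bit_vec4 [simp]: "finite (A :: (bit ^ 4) set)"
  using finite_subset[OF subset_UNIV finite_UNIV_bit_vec4] .

lemma card_bit_vec4: "card {x :: bit ^ 4. P x} = length (filter P bit_vec4_list)"
proof -
  have "distinct bit_vec4_list"
    by (simp add: bit_vec4_list_def)
  then show ?thesis
    by (simp add: distinct_length_filter set_bit_vec4_list)
qed

lemma card_UNIV_bit_vec4: "card (UNIV :: (bit ^ 4) set) = 16"
  using card_bit_vec4[of "\<lambda>_. True"] by (simp add: bit_vec4_list_def)

lemma card_nonzero_bit_vec4: "card {a :: bit ^ 4. a \<noteq> 0} = 15"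
  by (simp add: card_bit_vec4 bit_vec4_list_def)

lemma card_gf2_dot_kernel: "card {x. gf2_dot a x = 0} = 8" if "a \<noteq> 0"
  using that by (cases a rule: bit_vec4_cases) (simp_all add: card_bit_vec4 bit_vec4_list_def)

lemma card_planes_through_point: "card {a. a \<noteq> 0 \<and> gf2_dot a x = 0} = 7" if "x \<noteq> 0"
  using that by (cases x rule: bit_vec4_cases) (simp_all add: card_bit_vec4 bit_vec4_list_def)

lemma card_planes_through_two_points:
  "card {a. a \<noteq> 0 \<and> gf2_dot a x = 0 \<and> gf2_dot a y = 0} = 3" if "x \<noteq> 0" "y \<noteq> 0" "x \<noteq> y"
  using that by (cases x rule: bit_vec4_cases; cases y rule: bit_vec4_cases)
    (simp_all add: card_bit_vec4 bit_vec4_list_def)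

lemma ex_gf2_dot_nonzero: "\<exists>w. gf2_dot a w \<noteq> 0" if "a \<noteq> 0"
proof -
  have "\<forall>a. a \<noteq> 0 \<longrightarrow> (\<exists>w. gf2_dot a w \<noteq> 0)"
    unfolding all_bit_vec4 ex_bit_vec4 all_bool_eq ex_bool_eq by simp
  with that show ?thesis by blast
qed

definition pg_plane_of :: "bit ^ 4 \<Rightarrow> (bit ^ 4) set" where
  "pg_plane_of a = {x. x \<noteq> 0 \<and> gf2_dot a x = 0}"

lemma pg_plane_iff: "pg_plane P \<longleftrightarrow> (\<exists>a. a \<noteq> 0 \<and> P = pg_plane_of a)"
  by (simp add: pg_plane_def pg_plane_of_def)

lemma pg_plane_of_subset_imp_eq:
  assumes "a \<noteq> 0" "b \<noteq> 0" "pg_plane_of a \<subseteq> pg_plane_of b"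
  shows "a = b"
proof (rule ccontr)
  assume "a \<noteq> b"
  have "\<forall>a b. a \<noteq> 0 \<longrightarrow> b \<noteq> 0 \<longrightarrow> a \<noteq> b \<longrightarrow> (\<exists>x. x \<noteq> 0 \<and> gf2_dot a x = 0 \<and> gf2_dot b x \<noteq> 0)"
    unfolding all_bit_vec4 ex_bit_vec4 all_bool_eq ex_bool_eq by simp
  then obtain x where "x \<noteq> 0" "gf2_dot a x = 0" "gf2_dot b x \<noteq> 0"
    using assms(1,2) \<open>a \<noteq> b\<close> by blast
  with assms(3) show False
    unfolding pg_plane_of_def by blast
qed

lemma exists_plane_containing:
  assumes "finite T" "card T \<le> 3"
  shows "\<exists>b. b \<noteq> 0 \<and> (\<forall>x\<in>T. gf2_dot b x = 0)"
proof -
  define f where "f b = restrict (gf2_dot b) T" for b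
  have "card (T \<rightarrow>\<^sub>E (UNIV :: bit set)) = 2 ^ card T"
    using assms(1) by (simp add: card_PiE UNIV_bit numeral_2_eq_2)
  also have "\<dots> < card (UNIV :: (bit ^ 4) set)"
    unfolding card_UNIV_bit_vec4 using assms(2) power_increasing[of "card T" 3 "2::nat"] by simp
  finally have card_less: "card (T \<rightarrow>\<^sub>E (UNIV :: bit set)) < card (UNIV :: (bit ^ 4) set)" .
  have "\<not> inj f"
  proof
    assume "inj f"
    then have "card (UNIV :: (bit ^ 4) set) \<le> card (T \<rightarrow>\<^sub>E (UNIV :: bit set))"
      by (rule card_inj_on_le) (auto simp: f_def UNIV_bit intro: finite_PiE assms(1))
    with card_less show False
      by simp
  qed
  then obtain b1 b2 where "b1 \<noteq> b2" "f b1 = f b2"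
    unfolding inj_def by blast
  have "gf2_dot (b1 + b2) x = 0" if "x \<in> T" for x
  proof -
    have "gf2_dot b1 x = gf2_dot b2 x"
      using \<open>f b1 = f b2\<close> that by (metis f_def restrict_apply')
    then show ?thesis
      by (simp add: gf2_dot_add_left)
  qed
  moreover have "b1 + b2 \<noteq> 0"
    using \<open>b1 \<noteq> b2\<close> by (simp add: bit_vec_add_eq_0_iff)
  ultimately show ?thesis
    by blast
qed

lemma exists_other_plane_containing:
  assumes "finite T" "card T \<le> 2" "a \<noteq> 0"
  shows "\<exists>b. b \<noteq> 0 \<and> b \<noteq> a \<and> (\<forall>x\<in>T. gf2_dot b x = 0)"
proof -
  obtain w where w: "gf2_dot a w \<noteq> 0"
    using ex_gf2_dot_nonzero assms(3) by blast
  have "card (insert w T) \<le> 3"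
    using assms(1,2) card_insert_le_m1[of 3 T w] by (simp add: card_insert_if)
  then obtain b where "b \<noteq> 0" "\<forall>x\<in>insert w T. gf2_dot b x = 0"
    using exists_plane_containing assms(1) by (meson finite_insert)
  with w show ?thesis
    by auto
qed

lemma strong_blocking_section_in_plane_imp_eq:
  assumes "strong_blocking_set S" "a \<noteq> 0" "b \<noteq> 0" "pg_plane_of a \<inter> S \<subseteq> pg_plane_of b"
  shows "b = a"
proof -
  have span: "pg_span (pg_plane_of a \<inter> S) = pg_plane_of a"
    using assms(1,2) unfolding strong_blocking_set_def pg_plane_iff by blast
  have "vec.subspace {x. gf2_dot b x = 0}"
    by (simp add: vec.subspace_def gf2_dot_add_right gf2_dot_scale_right gf2_dot_zero_right)
  moreover have "pg_plane_of a \<inter> S \<subseteq> {x. gf2_dot b x = 0}"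
    using assms(4) unfolding pg_plane_of_def by blast
  ultimately have "vec.span (pg_plane_of a \<inter> S) \<subseteq> {x. gf2_dot b x = 0}"
    by (simp add: vec.span_minimal)
  then have "pg_plane_of a \<subseteq> pg_plane_of b"
    using span unfolding pg_span_def pg_plane_of_def by blast
  then show ?thesis
    using pg_plane_of_subset_imp_eq assms(2,3) by metis
qed

lemma strong_blocking_not_subset_plane:
  assumes "strong_blocking_set S" "a \<noteq> 0"
  shows "\<not> S \<subseteq> pg_plane_of a"
proof
  assume S_a: "S \<subseteq> pg_plane_of a"
  obtain c where "c \<noteq> 0" "c \<noteq> a"
    using exists_other_plane_containing[of "{}" a] assms(2) by auto
  moreover have "pg_plane_of c \<inter> S \<subseteq> pg_plane_of a"
    using S_a by blast
  ultimately show False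
    using strong_blocking_section_in_plane_imp_eq assms by metis
qed

lemma strong_blocking_section_not_subset_line:
  assumes "strong_blocking_set S" "a \<noteq> 0" "pg_line l"
  shows "\<not> pg_plane_of a \<inter> S \<subseteq> l"
proof
  assume section_l: "pg_plane_of a \<inter> S \<subseteq> l"
  obtain u v where l: "l = {u, v, u + v}"
    using assms(3) unfolding pg_line_def by blast
  have "card {u, v} \<le> 2"
    by (cases "u = v") simp_all
  then obtain b where b: "b \<noteq> 0" "b \<noteq> a" "\<forall>x\<in>{u, v}. gf2_dot b x = 0"
    using exists_other_plane_containing[of "{u, v}" a] assms(2) by auto
  then have "\<forall>x\<in>l. gf2_dot b x = 0"
    by (simp add: l gf2_dot_add_right)
  with section_l have "pg_plane_of a \<inter> S \<subseteq> pg_plane_of b"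
    unfolding pg_plane_of_def by blast
  with b(1,2) show False
    using strong_blocking_section_in_plane_imp_eq assms(1,2) by metis
qed

lemma strong_blocking_card_section_ge:
  assumes "strong_blocking_set S" "a \<noteq> 0"
  shows "3 \<le> card (pg_plane_of a \<inter> S)"
proof (rule ccontr)
  assume "\<not> ?thesis"
  then obtain b where b: "b \<noteq> 0" "b \<noteq> a" "\<forall>x\<in>pg_plane_of a \<inter> S. gf2_dot b x = 0"
    using exists_other_plane_containing[of "pg_plane_of a \<inter> S" a] assms(2) by auto
  then have "pg_plane_of a \<inter> S \<subseteq> pg_plane_of b"
    unfolding pg_plane_of_def by blast
  with b(1,2) show False
    using strong_blocking_section_in_plane_imp_eq assms by metis
qed

lemma strong_blocking_card_section_le:
  assumes "strong_blocking_set S" "a \<noteq> 0"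
  shows "card (pg_plane_of a \<inter> S) + 4 \<le> card S"
proof (rule ccontr)
  define R where "R = S - pg_plane_of a"
  assume "\<not> ?thesis"
  then have "card R \<le> 3"
    using card_Int_Diff[of S "pg_plane_of a"] by (simp add: R_def Int_commute)
  then obtain b0 where b0: "b0 \<noteq> 0" "\<forall>x\<in>R. gf2_dot b0 x = 0"
    using exists_plane_containing[OF finite_bit_vec4] by blast
  have S_nonzero: "x \<noteq> 0" if "x \<in> S" for x
    using assms(1) that unfolding strong_blocking_set_def pg_points_def by blast
  show False
  proof (cases "b0 = a")
    case True
    then have "S \<subseteq> pg_plane_of a"
      using b0(2) S_nonzero unfolding R_def pg_plane_of_def by blast
    with assms show False
      using strong_blocking_not_subset_plane by blast
  next
    case False
    have "a + b0 \<noteq> 0" "a + b0 \<noteq> a"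
      using False b0(1) by (simp_all add: bit_vec_add_eq_0_iff)
    moreover have "pg_plane_of (a + b0) \<inter> S \<subseteq> pg_plane_of a"
    proof
      fix x
      assume x: "x \<in> pg_plane_of (a + b0) \<inter> S"
      then have "gf2_dot a x + gf2_dot b0 x = 0"
        unfolding pg_plane_of_def gf2_dot_add_left by blast
      moreover have "gf2_dot b0 x = 0" if "gf2_dot a x \<noteq> 0"
        using b0(2) x that unfolding R_def pg_plane_of_def by blast
      ultimately have "gf2_dot a x = 0"
        by fastforce
      with x show "x \<in> pg_plane_of a"
        unfolding pg_plane_of_def by blast
    qed
    ultimately show False
      using strong_blocking_section_in_plane_imp_eq[of S "a + b0" a] assms by metis
  qed
qed

lemma card_plane_section_eq_sum:
  assumes "S \<subseteq> pg_points"
  shows "card (pg_plane_of a \<inter> S) = (\<Sum>x\<in>S. of_bool (gf2_dot a x = 0))"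
proof -
  have "pg_plane_of a \<inter> S = S \<inter> {x. gf2_dot a x = 0}"
    using assms unfolding pg_plane_of_def pg_points_def by blast
  then show ?thesis
    by simp
qed

lemma sum_card_plane_sections:
  assumes "S \<subseteq> pg_points"
  shows "(\<Sum>a | a \<noteq> 0. card (pg_plane_of a \<inter> S)) = 7 * card S"
proof -
  have "(\<Sum>a | a \<noteq> 0. card (pg_plane_of a \<inter> S))
      = (\<Sum>x\<in>S. \<Sum>a | a \<noteq> 0. of_bool (gf2_dot a x = 0))"
    unfolding card_plane_section_eq_sum[OF assms] by (rule sum.swap)
  also have "\<dots> = (\<Sum>x\<in>S. 7)"
  proof (rule sum.cong)
    fix x
    assume "x \<in> S"
    then have "x \<noteq> 0"
      using assms unfolding pg_points_def by blast
    then show "(\<Sum>a | a \<noteq> 0. of_bool (gf2_dot a x = 0)) = (7 :: nat)"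
      using card_planes_through_point by (simp add: Collect_conj_eq[symmetric])
  qed simp
  finally show ?thesis
    by simp
qed

lemma sum_card_plane_sections_squared:
  assumes "S \<subseteq> pg_points"
  shows "(\<Sum>a | a \<noteq> 0. card (pg_plane_of a \<inter> S) ^ 2) = card S * (3 * card S + 4)"
proof -
  have pairs: "(\<Sum>a | a \<noteq> 0. of_bool (gf2_dot a x = 0 \<and> gf2_dot a y = 0))
      = (if x = y then 7 else 3 :: nat)"
    if "x \<in> S" "y \<in> S" for x y
  proof -
    have "x \<noteq> 0" "y \<noteq> 0"
      using that assms unfolding pg_points_def by blast+
    then show ?thesis
      using card_planes_through_point[of x] card_planes_through_two_points[of x y]
      by (cases "x = y") (simp_all add: Collect_conj_eq[symmetric])
  qed
  have row: "(\<Sum>y\<in>S. if x = y then 7 else 3) = 3 * card S + 4" if "x \<in> S" for x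
  proof -
    have "(\<Sum>y\<in>S. if x = y then 7 else 3) = (\<Sum>y\<in>S. 3 + (if x = y then 4 else 0 :: nat))"
      by (rule sum.cong) simp_all
    also have "\<dots> = 3 * card S + 4"
      using that by (simp add: sum.distrib)
    finally show ?thesis .
  qed
  have "(\<Sum>a | a \<noteq> 0. card (pg_plane_of a \<inter> S) ^ 2)
      = (\<Sum>a | a \<noteq> 0. \<Sum>x\<in>S. \<Sum>y\<in>S. of_bool (gf2_dot a x = 0 \<and> gf2_dot a y = 0))"
    unfolding card_plane_section_eq_sum[OF assms] power2_eq_square sum_product
    by (simp only: of_bool_conj)
  also have "\<dots> = (\<Sum>x\<in>S. \<Sum>a | a \<noteq> 0. \<Sum>y\<in>S. of_bool (gf2_dot a x = 0 \<and> gf2_dot a y = 0))"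
    by (rule sum.swap)
  also have "\<dots> = (\<Sum>x\<in>S. \<Sum>y\<in>S. \<Sum>a | a \<noteq> 0. of_bool (gf2_dot a x = 0 \<and> gf2_dot a y = 0))"
    by (rule sum.cong[OF refl], rule sum.swap)
  also have "\<dots> = (\<Sum>x\<in>S. 3 * card S + 4)"
    by (simp only: pairs row cong: sum.cong)
  finally show ?thesis
    by simp
qed

lemma minimal_strong_blocking_card_section_3_or_5:
  assumes "strong_blocking_set S" "card S = 9" "a \<noteq> 0"
  shows "card (pg_plane_of a \<inter> S) = 3 \<or> card (pg_plane_of a \<inter> S) = 5"
proof -
  define k where "k b = int (card (pg_plane_of b \<inter> S))" for b
  let ?A = "{b :: bit ^ 4. b \<noteq> 0}"
  have S_points: "S \<subseteq> pg_points"
    using assms(1) unfolding strong_blocking_set_def by blast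
  have bounds: "3 \<le> k b" "k b \<le> 5" if "b \<in> ?A" for b
    using that strong_blocking_card_section_ge[OF assms(1)] strong_blocking_card_section_le[OF assms(1)]
      assms(2) by (force simp: k_def)+
  have "(\<Sum>b\<in>?A. (k b - 3) * (5 - k b))
      = 8 * (\<Sum>b\<in>?A. k b) - (\<Sum>b\<in>?A. (k b)\<^sup>2) - 15 * int (card ?A)"
    by (simp add: algebra_simps power2_eq_square sum_subtractf sum.distrib sum_distrib_left)
  also have "\<dots> = 0"
    using sum_card_plane_sections[OF S_points] sum_card_plane_sections_squared[OF S_points]
    by (simp add: k_def assms(2) card_nonzero_bit_vec4 flip: of_nat_sum of_nat_power)
  finally have "(\<Sum>b\<in>?A. (k b - 3) * (5 - k b)) = 0" .
  moreover have "0 \<le> (k b - 3) * (5 - k b)" if "b \<in> ?A" for b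
    using bounds[OF that] by simp
  ultimately have "\<forall>b\<in>?A. (k b - 3) * (5 - k b) = 0"
    using sum_nonneg_eq_0_iff[of ?A "\<lambda>b. (k b - 3) * (5 - k b)"] by simp
  then have "k a = 3 \<or> k a = 5"
    using assms(3) by simp
  then show ?thesis
    by (simp add: k_def)
qed

lemma pg_line_card: "pg_line l \<Longrightarrow> card l = 3"
  by (auto simp: pg_line_def bit_vec_add_eq_0_iff)

lemma zero_notin_pg_line: "pg_line l \<Longrightarrow> 0 \<notin> l"
  by (auto simp: pg_line_def bit_vec_add_eq_0_iff)

lemma pg_line_add_closed:
  assumes "pg_line l" "x \<in> insert 0 l" "y \<in> insert 0 l"
  shows "x + y \<in> insert 0 l"
  using assms by (auto simp: pg_line_def add_ac)

lemma add_in_line_if_in_plane_off_line: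
  assumes "a \<noteq> 0" "pg_line l" "l \<subseteq> pg_plane_of a"
    and "p \<in> pg_plane_of a - l" "q \<in> pg_plane_of a - l" "p \<noteq> q"
  shows "p + q \<in> l"
proof -
  define L where "L = insert 0 l"
  define K where "K = {x. gf2_dot a x = 0}"
  have L_K: "L \<subseteq> K"
    using assms(3) unfolding L_def K_def pg_plane_of_def by (auto simp: gf2_dot_zero_right)
  have p: "p \<in> K" "p \<notin> L"
    using assms(4) unfolding L_def K_def pg_plane_of_def by auto
  have coset_K: "(+) p ` L \<subseteq> K"
    using L_K p(1) unfolding K_def by (auto simp: gf2_dot_add_right)
  have disjoint: "L \<inter> (+) p ` L = {}"
  proof -
    have "p + s \<notin> L" if "s \<in> L" for s
    proof
      assume "p + s \<in> L"
      then have "(p + s) + s \<in> L"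
        using pg_line_add_closed[OF assms(2)] that unfolding L_def by blast
      with p(2) show False
        by (simp add: add.assoc)
    qed
    then show ?thesis
      by blast
  qed
  have "card L = 4"
    using pg_line_card[OF assms(2)] zero_notin_pg_line[OF assms(2)] by (simp add: L_def)
  moreover have "card ((+) p ` L) = card L"
    by (rule card_image) (simp add: inj_on_def)
  ultimately have "card (L \<union> (+) p ` L) = card K"
    using disjoint card_gf2_dot_kernel[OF assms(1)] by (simp add: K_def card_Un_disjoint)
  then have K_eq: "L \<union> (+) p ` L = K"
    using L_K coset_K by (simp add: card_subset_eq)
  have "q \<in> K" "q \<notin> L"
    using assms(5) unfolding L_def K_def pg_plane_of_def by auto
  then obtain s where s: "s \<in> L" "q = p + s"
    using K_eq by blast
  with assms(6) have "s \<in> l"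
    unfolding L_def by auto
  then show ?thesis
    by (simp add: s(2))
qed

lemma five_points_in_plane_with_line_two_lines:
  assumes "a \<noteq> 0" "pg_line l" "l \<subseteq> T" "T \<subseteq> pg_plane_of a" "card T = 5"
  obtains l' where "pg_line l'" "l' \<noteq> l" "card (l \<inter> l') = 1" "T = l \<union> l'"
proof -
  have "card (T - l) = 2"
    using card_Diff_subset[OF finite_bit_vec4 assms(3)] pg_line_card[OF assms(2)] assms(5) by simp
  then obtain p q where pq: "T - l = {p, q}" "p \<noteq> q"
    by (meson card_2_iff)
  then have "p + q \<in> l"
    using add_in_line_if_in_plane_off_line[OF assms(1,2)] assms(3,4) by blast
  have "p \<noteq> 0" "q \<noteq> 0"
    using pq(1) assms(4) unfolding pg_plane_of_def by blast+
  then have "pg_line {p, q, p + q}"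
    using pq(2) unfolding pg_line_def by blast
  moreover have "{p, q, p + q} \<noteq> l" "l \<inter> {p, q, p + q} = {p + q}"
    using pq(1) \<open>p + q \<in> l\<close> by blast+
  moreover have "T = l \<union> {p, q, p + q}"
    using pq(1) assms(3) \<open>p + q \<in> l\<close> by blast
  ultimately show ?thesis
    using that by simp
qed

theorem lemma2p1:
  fixes S :: "(bit ^ 4) set"
  assumes "strong_blocking_set S"
    and "card S = 9"
  shows "(\<forall>\<pi>. pg_plane \<pi> \<longrightarrow> card (\<pi> \<inter> S) \<le> 5)
       \<and> (\<forall>\<pi> l. pg_plane \<pi> \<and> pg_line l \<and> l \<subseteq> \<pi> \<and> l \<subseteq> S \<longrightarrow>
            card (\<pi> \<inter> S) = 5 \<and>
            (\<exists>l1 l2. pg_line l1 \<and> pg_line l2 \<and> l1 \<noteq> l2 \<and> l1 \<subseteq> S \<and> l2 \<subseteq> S \<and>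
                card (l1 \<inter> l2) = 1 \<and> \<pi> \<inter> S = l1 \<union> l2))"
proof (rule conjI; intro allI impI)
  fix \<pi>
  assume "pg_plane \<pi>"
  then obtain a where "a \<noteq> 0" "\<pi> = pg_plane_of a"
    unfolding pg_plane_iff by blast
  then show "card (\<pi> \<inter> S) \<le> 5"
    using strong_blocking_card_section_le[OF assms(1)] assms(2) by fastforce
next
  fix \<pi> l
  assume "pg_plane \<pi> \<and> pg_line l \<and> l \<subseteq> \<pi> \<and> l \<subseteq> S"
  then obtain a where a: "a \<noteq> 0" "\<pi> = pg_plane_of a" and l: "pg_line l" "l \<subseteq> \<pi> \<inter> S"
    unfolding pg_plane_iff by blast
  have "card (\<pi> \<inter> S) \<noteq> 3"
    using strong_blocking_section_not_subset_line[OF assms(1) a(1) l(1)] card_subset_eq[OF _ l(2)]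
      pg_line_card[OF l(1)] a(2) by force
  then have five: "card (\<pi> \<inter> S) = 5"
    using minimal_strong_blocking_card_section_3_or_5[OF assms a(1)] a(2) by blast
  then obtain l' where "pg_line l'" "l' \<noteq> l" "card (l \<inter> l') = 1" "\<pi> \<inter> S = l \<union> l'"
    using five_points_in_plane_with_line_two_lines[OF a(1) l(1) l(2)] a(2) by blast
  with five l show "card (\<pi> \<inter> S) = 5 \<and>
      (\<exists>l1 l2. pg_line l1 \<and> pg_line l2 \<and> l1 \<noteq> l2 \<and> l1 \<subseteq> S \<and> l2 \<subseteq> S \<and>
         card (l1 \<inter> l2) = 1 \<and> \<pi> \<inter> S = l1 \<union> l2)"
    by blast
qed

end
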